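(* Let $q\in\mathbb{C}^\times$ with $q\neq\pm1$, let $\mathbb{C}[x_1,\dots,x_n]$ be the polynomial algebra (the algebra of polynomial functions on an $n$-dimensional complex vector space with linear coordinates $x_1,\dots,x_n$), and fix $i\in\{1,\dots,n\}$. If $D$ is a twisted derivation of $\mathbb{C}[x_1,\dots,x_n]$ relative to $\gamma_{q,x_i}$, then there is a polynomial $f_i\in\mathbb{C}[x_1,\dots,x_n]$ such that $D=f_i\,\partial_{q,x_i}$ (i.e. $D(a)=f_i\cdot\partial_{q,x_i}(a)$ for all $a$).
   Context: For an associative $\mathbb{C}$-algebra $A$ and an algebra automorphism $\sigma$ of $A$, a twisted derivation of $A$ relative to $\sigma$ is a linear map $D\colon A\to A$ with $D(ab)=D(a)\sigma(b)+\sigma^{-1}(a)D(b)$ for all $a,b\in A$. Here $\gamma_{q,x_i}=q^{x_i\partial_{x_i}}$ is the algebra automorphism of $\mathbb{C}[x_1,\dots,x_n]$ with $x_i\mapsto qx_i$ and $x_j\mapsto x_j$ for $j\neq i$, and $\partial_{q,x_i}=\frac{1}{x_i}\,\frac{q^{x_i\partial_{x_i}}-q^{-x_i\partial_{x_i}}}{q-q^{-1}}$, i.e. the linear map sending a monomial $x_1^{a_1}\cdots x_n^{a_n}$ to $[a_i]_q\,x_1^{a_1}\cdots x_i^{a_i-1}\cdots x_n^{a_n}$, where $[v]_q=\frac{q^v-q^{-v}}{q-q^{-1}}$. It is a twisted derivation relative to $\gamma_{q,x_i}$. *)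

theory Defs
  imports Complex_Main "HOL-Library.Poly_Mapping"
begin

(* Polynomials in the variables indexed by the finite type 'v:
  a polynomial is a finitely supported map from monomials (exponent vectors
  'v =>0 nat) to complex coefficients. *)

type_synonym 'v cpoly = "('v \<Rightarrow>\<^sub>0 nat) \<Rightarrow>\<^sub>0 complex"

definition pscale :: "complex \<Rightarrow> 'v cpoly \<Rightarrow> 'v cpoly" where
  "pscale c p = Poly_Mapping.map (\<lambda>a. c * a) p"

definition twisted_derivation :: "('v cpoly \<Rightarrow> 'v cpoly) \<Rightarrow> ('v cpoly \<Rightarrow> 'v cpoly) \<Rightarrow> bool" where
  "twisted_derivation \<sigma> D \<longleftrightarrow>
     (\<forall>a b. D (a + b) = D a + D b) \<and>
     (\<forall>c a. D (pscale c a) = pscale c (D a)) \<and>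
     (\<forall>a b. D (a * b) = D a * \<sigma> b + inv \<sigma> a * D b)"

(* gamma_{q,x_i}: x_i |-> q x_i, other variables fixed. *)
definition qgamma :: "complex \<Rightarrow> 'v \<Rightarrow> 'v cpoly \<Rightarrow> 'v cpoly" where
  "qgamma q i p = Poly_Mapping.mapp (\<lambda>m c. q ^ Poly_Mapping.lookup m i * c) p"

definition qint :: "complex \<Rightarrow> nat \<Rightarrow> complex" where
  "qint q v = (q ^ v - inverse q ^ v) / (q - inverse q)"

definition qderiv :: "complex \<Rightarrow> 'v \<Rightarrow> 'v cpoly \<Rightarrow> 'v cpoly" where
  "qderiv q i p = (\<Sum>m\<in>Poly_Mapping.keys p. Poly_Mapping.single (m - Poly_Mapping.single i 1)
                                    (qint q (Poly_Mapping.lookup m i) * Poly_Mapping.lookup p m))"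

end

theory Submission
  imports Defs
begin

text \<open>Let \<open>f = D x\<^sub>i\<close>. For \<open>j \<noteq> i\<close>, applying the twisted Leibniz rule to both sides of
  \<open>x\<^sub>i x\<^sub>j = x\<^sub>j x\<^sub>i\<close> gives \<open>(q\<^sup>-\<^sup>1 - q) x\<^sub>i D x\<^sub>j = 0\<close>, so \<open>D x\<^sub>j = 0\<close> because \<open>q\<^sup>2 \<noteq> 1\<close>.
  Hence \<open>D\<close> commutes with multiplication by \<open>x\<^sub>j\<close>, while \<open>D (x\<^sub>i a) = f \<gamma>(a) + q\<^sup>-\<^sup>1 x\<^sub>i D a\<close>.
  With \<open>[k+1]\<^sub>q = q\<^sup>k + q\<^sup>-\<^sup>1 [k]\<^sub>q\<close> an induction over monomials gives \<open>D x\<^sup>m = f \<partial>\<^sub>q\<^sub>,\<^sub>x\<^sub>i x\<^sup>m\<close>,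
  and linearity extends this to all polynomials.\<close>

lemma update_eq_add_single:
  "k \<notin> Poly_Mapping.keys p \<Longrightarrow> Poly_Mapping.update k c p = p + Poly_Mapping.single k c"
  by (intro poly_mapping_eqI) (auto simp: lookup_update lookup_add lookup_single in_keys_iff)

lemma poly_mapping_single_induct [case_names zero single add]:
  fixes p :: "'a \<Rightarrow>\<^sub>0 'b::comm_monoid_add"
  assumes "P 0" and "\<And>k c. P (Poly_Mapping.single k c)"
    and "\<And>a b. P a \<Longrightarrow> P b \<Longrightarrow> P (a + b)"
  shows "P p"
  by (induction p rule: Poly_Mapping.update_induct) (simp_all add: assms update_eq_add_single)

lemma monomial_induct [case_names zero mult_var]:
  fixes m :: "'a \<Rightarrow>\<^sub>0 nat"
  assumes "P 0" and "\<And>m j. P m \<Longrightarrow> P (Poly_Mapping.single j 1 + m)"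
  shows "P m"
proof (induction m rule: Poly_Mapping.update_induct)
  case const
  show ?case using assms(1) .
next
  case (update m j k)
  have "P (m + Poly_Mapping.single j n)" for n
  proof (induction n)
    case 0
    show ?case using update(3) by simp
  next
    case (Suc n)
    have "m + Poly_Mapping.single j (Suc n) = Poly_Mapping.single j 1 + (m + Poly_Mapping.single j n)"
      by (simp add: single_add[symmetric] algebra_simps)
    then show ?case using assms(2)[OF Suc] by simp
  qed
  then show ?case using update(1) by (simp add: update_eq_add_single)
qed

lemma lookup_single_mult_add:
  fixes g :: "'a::cancel_comm_monoid_add \<Rightarrow>\<^sub>0 'b::comm_semiring_0"
  shows "Poly_Mapping.lookup (Poly_Mapping.single k c * g) (k + n) = c * Poly_Mapping.lookup g n"
  by (induction g rule: poly_mapping_single_induct)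
    (simp_all add: mult_single lookup_single when_def distrib_left lookup_add)

lemma single_mult_eq_0_iff:
  fixes g :: "'a::cancel_comm_monoid_add \<Rightarrow>\<^sub>0 'b::{comm_semiring_0, semiring_no_zero_divisors}"
  assumes "c \<noteq> 0"
  shows "Poly_Mapping.single k c * g = 0 \<longleftrightarrow> g = 0"
proof
  assume "Poly_Mapping.single k c * g = 0"
  then show "g = 0"
    using lookup_single_mult_add[of k c g] assms by (intro poly_mapping_eqI) (metis lookup_zero mult_eq_0_iff)
qed simp

lemma pscale_eq_single_mult: "pscale c p = Poly_Mapping.single 0 c * p"
  unfolding pscale_def mult_map_scale_conv_mult[symmetric] by simp

definition pvar :: "'v \<Rightarrow> 'v cpoly" where
  "pvar j = Poly_Mapping.single (Poly_Mapping.single j 1) 1"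

lemma pvar_mult_single: "pvar j * Poly_Mapping.single m c = Poly_Mapping.single (Poly_Mapping.single j 1 + m) c"
  by (simp add: pvar_def mult_single)

lemma lookup_qgamma:
  "Poly_Mapping.lookup (qgamma q i p) m = q ^ Poly_Mapping.lookup m i * Poly_Mapping.lookup p m"
  unfolding qgamma_def by (simp add: lookup_mapp in_keys_iff when_def)

lemma qgamma_single:
  "qgamma q i (Poly_Mapping.single m c) = Poly_Mapping.single m (q ^ Poly_Mapping.lookup m i * c)"
  by (intro poly_mapping_eqI) (simp add: lookup_qgamma lookup_single when_def)

lemma qgamma_one [simp]: "qgamma q i 1 = 1"
  using qgamma_single[of q i 0 1] by simp

lemma qgamma_pvar:
  "qgamma q i (pvar j) = (if j = i then Poly_Mapping.single (Poly_Mapping.single i 1) q else pvar j)"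
  by (simp add: pvar_def qgamma_single lookup_single)

lemma inv_qgamma:
  assumes "q \<noteq> 0"
  shows "inv (qgamma q i) = qgamma (inverse q) i"
  by (rule inv_equality; intro poly_mapping_eqI)
    (simp_all add: lookup_qgamma assms power_inverse field_simps)

lemma qderiv_eq_sum_superset:
  assumes "finite S" and "Poly_Mapping.keys p \<subseteq> S"
  shows "qderiv q i p = (\<Sum>m\<in>S. Poly_Mapping.single (m - Poly_Mapping.single i 1)
                                    (qint q (Poly_Mapping.lookup m i) * Poly_Mapping.lookup p m))"
  unfolding qderiv_def by (rule sum.mono_neutral_left[OF assms]) (auto simp: in_keys_iff)

lemma qderiv_add: "qderiv q i (a + b) = qderiv q i a + qderiv q i b"
proof -
  let ?S = "Poly_Mapping.keys a \<union> Poly_Mapping.keys b"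
  have "Poly_Mapping.keys (a + b) \<subseteq> ?S" by (rule keys_add)
  then show ?thesis
    by (simp add: qderiv_eq_sum_superset[of ?S] lookup_add distrib_left single_add sum.distrib)
qed

lemma qderiv_single:
  "qderiv q i (Poly_Mapping.single m c) =
     Poly_Mapping.single (m - Poly_Mapping.single i 1) (qint q (Poly_Mapping.lookup m i) * c)"
  unfolding qderiv_def by simp

lemma qderiv_zero [simp]: "qderiv q i 0 = 0"
  unfolding qderiv_def by simp

lemma qint_0 [simp]: "qint q 0 = 0"
  by (simp add: qint_def)

lemma qint_Suc:
  assumes "q \<noteq> 0" and "q - inverse q \<noteq> 0"
  shows "qint q (Suc k) = q ^ k + inverse q * qint q k"
  using assms unfolding qint_def by (simp add: field_simps power_inverse)

lemma q_minus_inverse_nonzero: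
  fixes q :: complex
  assumes "q \<noteq> 0" and "q \<noteq> 1" and "q \<noteq> -1"
  shows "q - inverse q \<noteq> 0"
proof
  assume "q - inverse q = 0"
  then have "(q - 1) * (q + 1) = 0"
    using assms(1) by (simp add: field_simps)
  then show False
    using assms(2,3) by (auto simp: add_eq_0_iff2)
qed

locale qgamma_twisted_derivation =
  fixes q :: complex and i :: 'v and D :: "'v cpoly \<Rightarrow> 'v cpoly"
  assumes q_nonzero: "q \<noteq> 0"
    and q_minus_inverse: "q - inverse q \<noteq> 0"
    and twisted: "twisted_derivation (qgamma q i) D"
begin

lemma D_add: "D (a + b) = D a + D b"
  and D_single_mult: "D (Poly_Mapping.single 0 c * a) = Poly_Mapping.single 0 c * D a"
  and D_mult: "D (a * b) = D a * qgamma q i b + qgamma (inverse q) i a * D b"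
  using twisted unfolding twisted_derivation_def inv_qgamma[OF q_nonzero] pscale_eq_single_mult
  by auto

lemma D_zero: "D 0 = 0"
  using D_add[of 0 0] by simp

lemma D_one: "D 1 = 0"
  using D_mult[of 1 1] by simp

lemma D_single: "D (Poly_Mapping.single m c) = Poly_Mapping.single 0 c * D (Poly_Mapping.single m 1)"
  using D_single_mult[of c "Poly_Mapping.single m 1"] by (simp add: mult_single)

lemma D_pvar_other:
  assumes "j \<noteq> i"
  shows "D (pvar j) = 0"
proof -
  let ?x = "\<lambda>c. Poly_Mapping.single (Poly_Mapping.single i 1) c"
  have "D (pvar i * pvar j) = D (pvar i) * pvar j + ?x (inverse q) * D (pvar j)"
    and "D (pvar j * pvar i) = D (pvar j) * ?x q + pvar j * D (pvar i)"
    using assms by (simp_all only: D_mult qgamma_pvar simp_thms if_True if_False not_sym[OF assms])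
  then have "?x (inverse q) * D (pvar j) = ?x q * D (pvar j)"
    by (simp add: mult.commute)
  then have "?x (inverse q - q) * D (pvar j) = 0"
    by (simp add: single_diff left_diff_distrib)
  then show ?thesis
    using q_minus_inverse by (simp add: single_mult_eq_0_iff)
qed

lemma D_pvar_other_mult: "j \<noteq> i \<Longrightarrow> D (pvar j * a) = pvar j * D a"
  by (simp add: D_mult D_pvar_other qgamma_pvar)

lemma D_pvar_mult:
  "D (pvar i * a) = D (pvar i) * qgamma q i a
     + Poly_Mapping.single (Poly_Mapping.single i 1) (inverse q) * D a"
  by (simp add: D_mult qgamma_pvar)

lemma D_monomial:
  "D (Poly_Mapping.single m 1) =
     D (pvar i) * Poly_Mapping.single (m - Poly_Mapping.single i 1) (qint q (Poly_Mapping.lookup m i))"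
proof (induction m rule: monomial_induct)
  case zero
  show ?case using D_one by simp
next
  case (mult_var m j)
  let ?e = "Poly_Mapping.single i 1" and ?f = "D (pvar i)" and ?k = "Poly_Mapping.lookup m i"
  show ?case
  proof (cases "j = i")
    case False
    have "D (Poly_Mapping.single (Poly_Mapping.single j 1 + m) 1) = pvar j * D (Poly_Mapping.single m 1)"
      by (simp only: pvar_mult_single[symmetric] D_pvar_other_mult[OF False])
    also have "\<dots> = ?f * Poly_Mapping.single (Poly_Mapping.single j 1 + (m - ?e)) (qint q ?k)"
      by (simp only: mult_var mult.left_commute[of _ ?f] pvar_mult_single)
    also have "Poly_Mapping.single j 1 + (m - ?e) = Poly_Mapping.single j 1 + m - ?e"
      using False by (intro poly_mapping_eqI) (auto simp: lookup_add lookup_minus lookup_single when_def)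
    also have "?k = Poly_Mapping.lookup (Poly_Mapping.single j 1 + m) i"
      using False by (simp add: lookup_add lookup_single)
    finally show ?thesis .
  next
    case True
    have "D (Poly_Mapping.single (Poly_Mapping.single i 1 + m) 1) =
          ?f * Poly_Mapping.single m (q ^ ?k) + Poly_Mapping.single ?e (inverse q) * D (Poly_Mapping.single m 1)"
      by (simp only: pvar_mult_single[symmetric] D_pvar_mult qgamma_single mult_1_right)
    also have "\<dots> = ?f * Poly_Mapping.single m (qint q (Suc ?k))"
    proof (cases "?k = 0")
      case True
      then show ?thesis by (simp add: mult_var qint_Suc[OF q_nonzero q_minus_inverse])
    next
      case False
      then have "?e + (m - ?e) = m"
        by (intro poly_mapping_eqI) (auto simp: lookup_add lookup_minus lookup_single when_def)
      then have "Poly_Mapping.single ?e (inverse q) * D (Poly_Mapping.single m 1)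
                 = ?f * Poly_Mapping.single m (inverse q * qint q ?k)"
        by (simp only: mult_var mult.left_commute[of _ ?f] mult_single)
      then show ?thesis
        by (simp only: qint_Suc[OF q_nonzero q_minus_inverse] single_add distrib_left)
    qed
    also have "Suc ?k = Poly_Mapping.lookup (Poly_Mapping.single i 1 + m) i"
      by (simp add: lookup_add)
    finally show ?thesis
      using True by (simp only: add_diff_cancel_left')
  qed
qed

theorem D_eq_mult_qderiv: "D a = D (pvar i) * qderiv q i a"
proof (induction a rule: poly_mapping_single_induct)
  case zero
  show ?case by (simp add: D_zero)
next
  case (single m c)
  show ?case
    by (simp only: D_single[of m c] D_monomial qderiv_single mult.left_commute[of _ "D (pvar i)"] mult_single
        add_0 mult.commute[of c])
next
  case (add a b)
  then show ?case by (simp add: D_add qderiv_add distrib_left)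
qed

end

theorem lemma1p2:
  fixes q :: complex and i :: "'v::finite" and D :: "'v cpoly \<Rightarrow> 'v cpoly"
  assumes "q \<noteq> 0" and "q \<noteq> 1" and "q \<noteq> -1"
    and "twisted_derivation (qgamma q i) D"
  shows "\<exists>f :: 'v cpoly. \<forall>a. D a = f * qderiv q i a"
proof -
  interpret qgamma_twisted_derivation q i D
    using assms q_minus_inverse_nonzero by unfold_locales
  show ?thesis
    using D_eq_mult_qderiv by blast
qed

end
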